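(* Let $A=\langle V,\textit{val}_0,\delta\rangle$ be an arena over disjoint finite Boolean sets $\mathbb{E},\mathbb{C}$, let $Pr\subseteq Pred(V)$ and $\mathbb{E}'\supseteq\mathbb{E}$ be finite, and let $M=\langle S,s_0,2^{\mathbb{C}},2^{\mathbb{E}'\cup Pr},\rightarrow,out\rangle$ be a counterstrategy (Moore machine) that is not concretisable w.r.t. $A$. Then $M$ induces a finite counterexample: there are $k\ge0$, controller choices $C_0,\dots,C_k\subseteq\mathbb{C}$ and the corresponding run $s_0,\dots,s_k$ of $M$ (with $s_{i+1}$ the $C_i$-successor of $s_i$), giving letters $a_i=C_i\cup out(s_i)\in 2^{\mathbb{E}'\cup\mathbb{C}\cup Pr}$, such that concretisability fails locally only on $a_k$: defining $\textit{val}_0$ as the arena's initial valuation and $\textit{val}_{i+1}=\delta(\textit{val}_i,(out(s_i)\cap\mathbb{E})\cup C_i)$, for every $i<k$ step $i$ is consistent while step $k$ is not, where step $i$ is consistent if $\textit{val}_i\models\bigwedge\!\!\bigwedge ST_i$ (w.r.t. the state predicates of $Pr$) for the state predicates $ST_i$ of $out(s_i)$, and, if $i\ge1$, $(\textit{val}_{i-1},\textit{val}_i)\models\bigwedge\!\!\bigwedge TR_i$ (w.r.t. the transition predicates of $Pr$) for the transition predicates $TR_i$ of $out(s_i)$.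
   Context: Theory setting: fix a first-order theory with constants $\mathcal{C}$. For finite $V$, $\mathcal{T}(V)$ are terms over $V$; $V_{prev}=\{v_{prev}\}$ fresh copies. State predicates: predicates over $\mathcal{T}(V)$; transition predicates: over $\mathcal{T}(V\cup V_{prev})$; $Pred(V)$ their union. Valuations $V\to\mathcal{C}$ form $\textit{Val}(V)$. Updates $U:V\to\mathcal{T}(V)$ act by $U(\textit{val})(v)=$ value of $U(v)$ under $\textit{val}$. $\textit{val}\models s$: $\textit{val}$ is a model of $s$; $(\textit{val},\textit{val}')\models t$: $\textit{val}_{prev}\cup\textit{val}'$ is a model of $t$, with $\textit{val}_{prev}(v_{prev})=\textit{val}(v)$. For $S\subseteq T$, $\bigwedge\!\!\bigwedge_T S:=\bigwedge S\wedge\bigwedge_{s\in T\setminus S}\neg s$. Arena $A=\langle V,\textit{val}_0,\delta\rangle$: $\delta$ is a finite-domain partial function from Boolean combinations of $\mathbb{E}\cup\mathbb{C}\cup Pred(V)$ to updates with, for each $\textit{val}$, $E\subseteq\mathbb{E}$, $C\subseteq\mathbb{C}$, exactly one $f\in dom(\delta)$ with $(\textit{val},E\cup C)\models f$; $\delta(\textit{val},E\cup C):=\delta(f)(\textit{val})$. Moore machine: total deterministic transition function $\rightarrow:S\times2^{\mathbb{C}}\to S$ and output $out:S\to2^{\mathbb{E}'\cup Pr}$ (the state set may be infinite). Concretisability of $M$: let $\preceq_A\subseteq\textit{Val}(V)\times S$ be the largest relation such that whenever $\textit{val}\preceq_A s$ with $out(s)=E\cup ST\cup TR$ ($E\subseteq\mathbb{E}'$,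 $ST$ state predicates, $TR$ transition predicates): (1) $\textit{val}\models\bigwedge\!\!\bigwedge ST$ (w.r.t. state predicates of $Pr$); (2) for every $C\subseteq\mathbb{C}$, with $\textit{val}_C=\delta(\textit{val},(E\cap\mathbb{E})\cup C)$, $s_C$ the $C$-successor of $s$, $TR_C$ the transition predicates in $out(s_C)$: (a) $(\textit{val},\textit{val}_C)\models\bigwedge\!\!\bigwedge TR_C$ (w.r.t. transition predicates of $Pr$) and (b) $\textit{val}_C\preceq_A s_C$. $M$ is concretisable w.r.t. $A$ if $\textit{val}_0\preceq_A s_0$. *)

theory Defs
  imports Main
begin

(* Atoms: a single type 'a of propositional atoms; the sets Ee (environment
   Booleans), Cc (controller Booleans), Ee' and the predicate sets are subsets. *)

record ('v,'a) arena =
  a_init  :: 'v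
  a_delta :: "'v \<Rightarrow> 'a set \<Rightarrow> 'v"   (* delta(val, E \<union> C) *)

record ('s,'a) moore =
  m_init  :: 's
  m_trans :: "'s \<Rightarrow> 'a set \<Rightarrow> 's"
  m_out   :: "'s \<Rightarrow> 'a set"

definition bigconj_st :: "('a \<Rightarrow> 'v \<Rightarrow> bool) \<Rightarrow> 'a set \<Rightarrow> 'a set \<Rightarrow> 'v \<Rightarrow> bool" where
  "bigconj_st stsem T S val \<longleftrightarrow>
     (\<forall>p\<in>S. stsem p val) \<and> (\<forall>p\<in>T - S. \<not> stsem p val)"

definition bigconj_tr :: "('a \<Rightarrow> 'v \<Rightarrow> 'v \<Rightarrow> bool) \<Rightarrow> 'a set \<Rightarrow> 'a set \<Rightarrow> 'v \<Rightarrow> 'v \<Rightarrow> bool" where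
  "bigconj_tr trsem T S val val' \<longleftrightarrow>
     (\<forall>p\<in>S. trsem p val val') \<and> (\<forall>p\<in>T - S. \<not> trsem p val val')"

coinductive conc_le ::
  "'a set \<Rightarrow> 'a set \<Rightarrow> 'a set \<Rightarrow> 'a set \<Rightarrow> 'a set \<Rightarrow> 'a set \<Rightarrow>
   ('a \<Rightarrow> 'v \<Rightarrow> bool) \<Rightarrow> ('a \<Rightarrow> 'v \<Rightarrow> 'v \<Rightarrow> bool) \<Rightarrow>
   ('v,'a) arena \<Rightarrow> ('s,'a) moore \<Rightarrow> 'v \<Rightarrow> 's \<Rightarrow> bool"
  for Ee Cc Ee' Pr SP TP stsem trsem A M where
  "\<lbrakk> bigconj_st stsem (Pr \<inter> SP) (m_out M s \<inter> SP) val;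
     \<forall>C. C \<subseteq> Cc \<longrightarrow>
        bigconj_tr trsem (Pr \<inter> TP) (m_out M (m_trans M s C) \<inter> TP) val
           (a_delta A val ((m_out M s \<inter> Ee' \<inter> Ee) \<union> C))
      \<and> conc_le Ee Cc Ee' Pr SP TP stsem trsem A M
           (a_delta A val ((m_out M s \<inter> Ee' \<inter> Ee) \<union> C)) (m_trans M s C) \<rbrakk>
   \<Longrightarrow> conc_le Ee Cc Ee' Pr SP TP stsem trsem A M val s"

definition concretisable where
  "concretisable Ee Cc Ee' Pr SP TP stsem trsem A M \<longleftrightarrow>
     conc_le Ee Cc Ee' Pr SP TP stsem trsem A M (a_init A) (m_init M)"

primrec run_vals :: "'a set \<Rightarrow> ('v,'a) arena \<Rightarrow> ('s,'a) moore \<Rightarrow> (nat \<Rightarrow> 'a set) \<Rightarrow> (nat \<Rightarrow> 's) \<Rightarrow> nat \<Rightarrow> 'v" where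
  "run_vals Ee A M Cs ss 0 = a_init A"
| "run_vals Ee A M Cs ss (Suc i) =
     a_delta A (run_vals Ee A M Cs ss i) ((m_out M (ss i) \<inter> Ee) \<union> Cs i)"

definition step_consistent where
  "step_consistent Ee Pr SP TP stsem trsem A M Cs ss i \<longleftrightarrow>
     bigconj_st stsem (Pr \<inter> SP) (m_out M (ss i) \<inter> SP) (run_vals Ee A M Cs ss i)
   \<and> (i \<ge> 1 \<longrightarrow> bigconj_tr trsem (Pr \<inter> TP) (m_out M (ss i) \<inter> TP)
                     (run_vals Ee A M Cs ss (i - 1)) (run_vals Ee A M Cs ss i))"

end

theory Submission
  imports Defs
begin

(* If no run of M ever reaches an inconsistent step, then the configurations (val, s) reachable
   along runs of M in the arena form a post-fixed point of the operator whose greatest fixed point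
   is the concretisation relation, so by coinduction M is concretisable. Hence some run has an
   inconsistent step, and its first one is the counterexample. *)

definition run_upto :: "'a set \<Rightarrow> ('s,'a) moore \<Rightarrow> nat \<Rightarrow> (nat \<Rightarrow> 'a set) \<Rightarrow> (nat \<Rightarrow> 's) \<Rightarrow> bool" where
  "run_upto Cc M k Cs ss \<longleftrightarrow>
     (\<forall>i. Cs i \<subseteq> Cc) \<and> ss 0 = m_init M \<and> (\<forall>i<k. ss (Suc i) = m_trans M (ss i) (Cs i))"

lemma run_upto_le:
  "run_upto Cc M k Cs ss \<Longrightarrow> j \<le> k \<Longrightarrow> run_upto Cc M j Cs ss"
  unfolding run_upto_def by simp

lemma run_upto_extend:
  "run_upto Cc M k Cs ss \<Longrightarrow> C \<subseteq> Cc \<Longrightarrow>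
   run_upto Cc M (Suc k) (Cs(k := C)) (ss(Suc k := m_trans M (ss k) C))"
  unfolding run_upto_def by (auto simp: less_Suc_eq)

lemma run_vals_cong:
  "(\<And>i. i < n \<Longrightarrow> Cs i = Cs' i \<and> ss i = ss' i) \<Longrightarrow>
   run_vals Ee A M Cs ss n = run_vals Ee A M Cs' ss' n"
  by (induction n) auto

lemma run_vals_extend:
  "run_vals Ee A M (Cs(k := C)) (ss(Suc k := t)) k = run_vals Ee A M Cs ss k"
  by (rule run_vals_cong) simp

lemma first_inconsistent_step:
  assumes "run_upto Cc M k Cs ss"
    and "\<not> step_consistent Ee Pr SP TP stsem trsem A M Cs ss k"
  obtains j where "j \<le> k" and "run_upto Cc M j Cs ss"
    and "\<forall>i<j. step_consistent Ee Pr SP TP stsem trsem A M Cs ss i"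
    and "\<not> step_consistent Ee Pr SP TP stsem trsem A M Cs ss j"
proof -
  obtain j where "j \<le> k" "\<not> step_consistent Ee Pr SP TP stsem trsem A M Cs ss j"
    and "\<forall>i<j. step_consistent Ee Pr SP TP stsem trsem A M Cs ss i"
    using ex_least_nat_le[where P = "\<lambda>i. \<not> step_consistent Ee Pr SP TP stsem trsem A M Cs ss i"]
      assms(2) by blast
  with assms(1) show thesis
    using that run_upto_le by blast
qed

lemma concretisable_if_all_steps_consistent:
  assumes "Ee \<subseteq> Ee'"
    and consistent: "\<And>k Cs ss. run_upto Cc M k Cs ss \<Longrightarrow>
                       step_consistent Ee Pr SP TP stsem trsem A M Cs ss k"
  shows "concretisable Ee Cc Ee' Pr SP TP stsem trsem A M"
proof -
  define reachable where "reachable val s \<longleftrightarrow>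
    (\<exists>k Cs ss. run_upto Cc M k Cs ss \<and> val = run_vals Ee A M Cs ss k \<and> s = ss k)" for val s
  have init: "reachable (a_init A) (m_init M)"
    unfolding reachable_def run_upto_def by (intro exI[of _ 0] exI[of _ "\<lambda>_. {}"]) auto
  have post_fixed: "bigconj_st stsem (Pr \<inter> SP) (m_out M s \<inter> SP) val \<and>
      (\<forall>C\<subseteq>Cc.
        bigconj_tr trsem (Pr \<inter> TP) (m_out M (m_trans M s C) \<inter> TP) val
          (a_delta A val ((m_out M s \<inter> Ee' \<inter> Ee) \<union> C))
        \<and> reachable (a_delta A val ((m_out M s \<inter> Ee' \<inter> Ee) \<union> C)) (m_trans M s C))"
    if "reachable val s" for val s
  proof -
    obtain k Cs ss where run: "run_upto Cc M k Cs ss"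
      and val: "val = run_vals Ee A M Cs ss k" and s: "s = ss k"
      using \<open>reachable val s\<close> unfolding reachable_def by blast
    let ?succ = "\<lambda>C. a_delta A val ((m_out M s \<inter> Ee' \<inter> Ee) \<union> C)"
    have "bigconj_st stsem (Pr \<inter> SP) (m_out M s \<inter> SP) val"
      using consistent[OF run] unfolding step_consistent_def val s by blast
    moreover have "bigconj_tr trsem (Pr \<inter> TP) (m_out M (m_trans M s C) \<inter> TP) val (?succ C)
      \<and> reachable (?succ C) (m_trans M s C)" if "C \<subseteq> Cc" for C
    proof -
      let ?Cs = "Cs(k := C)" and ?ss = "ss(Suc k := m_trans M (ss k) C)"
      have run': "run_upto Cc M (Suc k) ?Cs ?ss"
        using run_upto_extend[OF run that] .
      have succ: "run_vals Ee A M ?Cs ?ss (Suc k) = ?succ C"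
        by (simp add: run_vals_extend Int_assoc Int_absorb1[OF \<open>Ee \<subseteq> Ee'\<close>] val s)
      have "bigconj_tr trsem (Pr \<inter> TP) (m_out M (m_trans M s C) \<inter> TP) val (?succ C)"
        using consistent[OF run'] succ
        by (simp add: step_consistent_def run_vals_extend val s)
      moreover have "reachable (?succ C) (m_trans M s C)"
        unfolding reachable_def using run' succ s by fastforce
      ultimately show ?thesis ..
    qed
    ultimately show ?thesis
      by blast
  qed
  show ?thesis
    unfolding concretisable_def
    using init by (rule conc_le.coinduct[where X = reachable]) (use post_fixed in blast)
qed

theorem mainTheorem4:
  fixes A :: "('v,'a) arena" and M :: "('s,'a) moore"
    and Ee Cc Ee' Pr SP TP :: "'a set"
    and stsem :: "'a \<Rightarrow> 'v \<Rightarrow> bool" and trsem :: "'a \<Rightarrow> 'v \<Rightarrow> 'v \<Rightarrow> bool"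
  assumes "finite Ee" and "finite Cc" and "Ee \<inter> Cc = {}"
    and "finite Ee'" and "Ee \<subseteq> Ee'" and "finite Pr"
    and "SP \<inter> TP = {}" and "Pr \<subseteq> SP \<union> TP"
    and "Ee' \<inter> Cc = {}" and "(Ee' \<union> Cc) \<inter> (SP \<union> TP) = {}"
    and "\<forall>s. m_out M s \<subseteq> Ee' \<union> Pr"
    and "\<not> concretisable Ee Cc Ee' Pr SP TP stsem trsem A M"
  shows "\<exists>k Cs ss. ss 0 = m_init M
           \<and> (\<forall>i\<le>k. Cs i \<subseteq> Cc)
           \<and> (\<forall>i<k. ss (Suc i) = m_trans M (ss i) (Cs i))
           \<and> (\<forall>i<k. step_consistent Ee Pr SP TP stsem trsem A M Cs ss i)
           \<and> \<not> step_consistent Ee Pr SP TP stsem trsem A M Cs ss k"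
proof -
  obtain k Cs ss where "run_upto Cc M k Cs ss"
    and "\<not> step_consistent Ee Pr SP TP stsem trsem A M Cs ss k"
    using concretisable_if_all_steps_consistent[OF \<open>Ee \<subseteq> Ee'\<close>]
      \<open>\<not> concretisable Ee Cc Ee' Pr SP TP stsem trsem A M\<close> by blast
  then obtain j where "run_upto Cc M j Cs ss"
    and "\<forall>i<j. step_consistent Ee Pr SP TP stsem trsem A M Cs ss i"
    and "\<not> step_consistent Ee Pr SP TP stsem trsem A M Cs ss j"
    by (rule first_inconsistent_step)
  then show ?thesis
    unfolding run_upto_def by blast
qed

end
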